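(* Let $w,u$ be integers with $w/2 \le u < w$, fix a sign, and let $q = 2^w - 2^u \pm 1$. Let $\lambda$ be a positive integer multiple of $q$, and let $b = \lambda/q$. Define $c = \lfloor \lambda/2^w \rfloor$ and, for integers $x$, $$v(x) = \left\lfloor -\frac{x(2^u \mp 1)}{2^w} \right\rfloor, \qquad f(x) = x + v(x),$$ where $\mp$ is the sign opposite to the one in $q$, so that $q = 2^w - (2^u \mp 1)$. Let $b_0 = c$ and $b_{i+1} = b_i + (c - f(b_i))$. Let $N$ be the least index with $f(b_N) = c$. Then $b_i \le b$ for every $0 \le i \le N$.
   Context: The sequence $b_0, b_1, \dots, b_N$ consists of the values produced by the loop of a division algorithm. The loop starts at $b_0 = c$, repeats the update $b_{i+1} = b_i + (c - f(b_i))$ while $f(b_i) \ne c$, and stops at the first index $N$ with $f(b_N) = c$. *)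

theory Defs
  imports Complex_Main
begin

text \<open>Sign s is +1 or -1; q = 2^w - 2^u + s, and v(x) = floor(-x(2^u - s)/2^w).\<close>

definition vfun :: "nat \<Rightarrow> nat \<Rightarrow> int \<Rightarrow> int \<Rightarrow> int" where
  "vfun w u s x = \<lfloor> - (real_of_int x * (2 ^ u - real_of_int s)) / 2 ^ w \<rfloor>"

definition ffun :: "nat \<Rightarrow> nat \<Rightarrow> int \<Rightarrow> int \<Rightarrow> int" where
  "ffun w u s x = x + vfun w u s x"

primrec bseq :: "nat \<Rightarrow> nat \<Rightarrow> int \<Rightarrow> int \<Rightarrow> nat \<Rightarrow> int" where
  "bseq w u s c 0 = c"
| "bseq w u s c (Suc i) = bseq w u s c i + (c - ffun w u s (bseq w u s c i))"

end

theory Submission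
  imports Defs
begin

text \<open>
  Since \<open>q = 2^w - (2^u - s)\<close>, the map \<open>f\<close> is \<open>x \<mapsto> \<lfloor>x r\<rfloor>\<close> with \<open>r = q / 2^w \<le> 1\<close>, and
  \<open>c = \<lfloor>b r\<rfloor>\<close>. For \<open>x \<le> b\<close> the correction \<open>c - f(x) = \<lfloor>b r\<rfloor> - \<lfloor>x r\<rfloor>\<close> is an integer
  smaller than \<open>(b - x) r + 1 \<le> (b - x) + 1\<close>, so one step of the iteration never overshoots
  \<open>b\<close>. Starting from \<open>c \<le> b\<close>, no iterate exceeds \<open>b\<close>, whether or not the loop stops; of the
  hypothesis \<open>w/2 \<le> u\<close> only \<open>u \<ge> 1\<close> is needed, to make \<open>q\<close> positive.
\<close>

lemma ffun_eq_floor_mult: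
  assumes "q = 2 ^ w - 2 ^ u + s"
  shows "ffun w u s x = \<lfloor>real_of_int x * (real_of_int q / 2 ^ w)\<rfloor>"
proof -
  have q_real: "real_of_int q = 2 ^ w - 2 ^ u + real_of_int s"
    using assms by simp
  have "real_of_int x * (real_of_int q / 2 ^ w)
      = - (real_of_int x * (2 ^ u - real_of_int s)) / 2 ^ w + real_of_int x"
    unfolding q_real by (simp add: field_simps)
  then show ?thesis
    unfolding ffun_def vfun_def by (metis floor_add_int add.commute)
qed

lemma add_floor_mult_diff_le:
  fixes x b :: int and r :: real
  assumes "x \<le> b" and "r \<le> 1"
  shows "x + (\<lfloor>real_of_int b * r\<rfloor> - \<lfloor>real_of_int x * r\<rfloor>) \<le> b"
proof -
  have "(real_of_int b - real_of_int x) * r \<le> real_of_int b - real_of_int x"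
    using assms by (simp add: mult_left_le)
  moreover have "real_of_int \<lfloor>real_of_int b * r\<rfloor> - real_of_int \<lfloor>real_of_int x * r\<rfloor>
      < (real_of_int b - real_of_int x) * r + 1"
    by (simp add: left_diff_distrib) linarith
  ultimately show ?thesis by linarith
qed

lemma bseq_le_of_ffun_eq_floor_mult:
  fixes b c :: int and r :: real
  assumes ffun: "\<And>x. ffun w u s x = \<lfloor>real_of_int x * r\<rfloor>"
    and "r \<le> 1" and "0 \<le> b" and c: "c = \<lfloor>real_of_int b * r\<rfloor>"
  shows "bseq w u s c i \<le> b"
proof (induction i)
  case 0
  have "real_of_int b * r \<le> real_of_int b"
    using \<open>r \<le> 1\<close> \<open>0 \<le> b\<close> by (simp add: mult_left_le)
  then show ?case
    unfolding c bseq.simps by linarith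
next
  case (Suc i)
  then show ?case
    using add_floor_mult_diff_le[OF Suc \<open>r \<le> 1\<close>] by (simp add: ffun c)
qed

lemma modulus_bounds:
  fixes q s :: int
  assumes "1 \<le> u" and "u < w" and "s = 1 \<or> s = -1" and "q = 2 ^ w - 2 ^ u + s"
  shows "0 < q" and "q \<le> 2 ^ w"
proof -
  have "2 * (2::int) ^ u \<le> 2 ^ w"
    using power_increasing[of "Suc u" w "2::int"] \<open>u < w\<close> by simp
  moreover have "(2::int) \<le> 2 ^ u"
    using power_increasing[of 1 u "2::int"] \<open>1 \<le> u\<close> by simp
  moreover have "-1 \<le> s" and "s \<le> 1"
    using assms(3) by auto
  ultimately show "0 < q" and "q \<le> 2 ^ w"
    using assms(4) by linarith+
qed

theorem theorem2:
  fixes w u N :: nat and s q lam b c :: int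
  assumes "real w / 2 \<le> real u" and "u < w"
    and "s = 1 \<or> s = -1"
    and "q = 2 ^ w - 2 ^ u + s"
    and "lam > 0" and "q dvd lam"
    and "b = lam div q"
    and "c = \<lfloor> real_of_int lam / 2 ^ w \<rfloor>"
    and "ffun w u s (bseq w u s c N) = c"
    and "\<forall>i<N. ffun w u s (bseq w u s c i) \<noteq> c"
  shows "\<forall>i\<le>N. bseq w u s c i \<le> b"
proof -
  have "1 \<le> u" using assms(1,2) by linarith
  note q_bounds = modulus_bounds[OF this assms(2-4)]
  have lam: "lam = b * q" using assms(6,7) by simp
  have "0 \<le> b"
    using assms(5) q_bounds(1) unfolding lam by (simp add: zero_less_mult_iff)
  moreover have "real_of_int q / 2 ^ w \<le> 1"
    using q_bounds(2) by (simp add: divide_le_eq flip: of_int_le_iff)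
  moreover have "c = \<lfloor>real_of_int b * (real_of_int q / 2 ^ w)\<rfloor>"
    unfolding assms(8) lam by simp
  ultimately have "bseq w u s c i \<le> b" for i
    using bseq_le_of_ffun_eq_floor_mult ffun_eq_floor_mult[OF assms(4)] by blast
  then show ?thesis by blast
qed

end
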